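(* In the QC setting, with $x_{\rm avg}(i)=\frac1N\mathbf{1}^T\mathbf{x}(i)$, for every $a>0$, $$\mathbb{P}\Big[\sup_{j\ge0}|x_{\rm avg}(j)|>a\Big]\le\frac{\Big[x_{\rm avg}^2(0)+\frac{2|\mathcal{M}|\Delta^2}{3N^2}\sum_{j\ge0}\alpha^2(j)\Big]^{1/2}}{a}.$$
   Context: QC setting. Let $N\ge 2$; all random objects live on one probability space. $\{L(i)\}_{i\ge0}$ is an i.i.d. sequence of random graph Laplacians $L(i)=D(i)-A(i)$, where $A(i)$ is the adjacency matrix (symmetric, $\{0,1\}$-valued, zero diagonal) of a random undirected simple graph on $\{1,\dots,N\}$, $D(i)=\mathrm{diag}(d_1(i),\dots,d_N(i))$ with $d_n(i)$ the degree of node $n$, and $\Omega_n(i)=\{l:A_{nl}(i)=1\}$. Link failures at a given time may be arbitrarily correlated across edges. Let $\overline{L}=\mathbb{E}[L(i)]$ with eigenvalues $0=\lambda_1(\overline{L})\le\lambda_2(\overline{L})\le\cdots\le\lambda_N(\overline{L})$; assume $\lambda_2(\overline{L})>0$. $\mathcal{M}$ denotes the set of realizable edges (those appearing in the random graph with positive probability). Quantizer: step $\Delta>0$, $q(y)=k\Delta$ if $(k-\tfrac12)\Delta\le y<(k+\tfrac12)\Delta$, $k\in\mathbb{Z}$. Dither: $\{\nu_{nl}(i)\}$ i.i.d. uniform on $[-\Delta/2,\Delta/2)$, independent of $\{L(i)\}$. Weights: deterministic $\alpha(i)>0$ with $\sum_i\alpha(i)=\infty$, $\sum_i\alpha^2(i)<\infty$.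 QC recursion: $x_n(i+1)=(1-\alpha(i)d_n(i))x_n(i)+\alpha(i)\sum_{l\in\Omega_n(i)}q(x_l(i)+\nu_{nl}(i))$, with deterministic $\mathbf{x}(0)\in\mathbb{R}^N$. With $\varepsilon_{nl}(i)=q(x_l(i)+\nu_{nl}(i))-(x_l(i)+\nu_{nl}(i))$, $\Upsilon_n(i)=-\sum_{l\in\Omega_n(i)}\nu_{nl}(i)$, $\Psi_n(i)=-\sum_{l\in\Omega_n(i)}\varepsilon_{nl}(i)$, this reads $\mathbf{x}(i+1)=\mathbf{x}(i)-\alpha(i)[L(i)\mathbf{x}(i)+\Upsilon(i)+\Psi(i)]$. Conditionally on $\mathbf{x}(0),\{L(j),\Upsilon(j),\Psi(j)\}_{j<i}$ and $L(i)$, the $\varepsilon_{nl}(i)$ are i.i.d. uniform on $[-\Delta/2,\Delta/2)$ (as are the $\nu_{nl}(i)$). *)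

theory Defs
  imports "HOL-Probability.Probability"
begin

text \<open>Quantizer with step Delta: q(y) = k Delta iff (k - 1/2) Delta \<le> y < (k + 1/2) Delta.\<close>
definition quant :: "real \<Rightarrow> real \<Rightarrow> real" where
  "quant \<Delta> y = \<Delta> * of_int \<lfloor>y / \<Delta> + 1/2\<rfloor>"

definition nbhd :: "('n \<Rightarrow> 'n \<Rightarrow> bool) \<Rightarrow> 'n \<Rightarrow> 'n set" where
  "nbhd Adj n = {l. Adj n l}"

definition degree :: "('n \<Rightarrow> 'n \<Rightarrow> bool) \<Rightarrow> 'n \<Rightarrow> nat" where
  "degree Adj n = card (nbhd Adj n)"

text \<open>The QC recursion. A i \<omega> is the adjacency of the random graph at time i,
  \<nu> i n l \<omega> the dither nu_{nl}(i), \<alpha> the weights, x0 the initial state.\<close>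
primrec qc_state ::
  "('n::finite \<Rightarrow> real) \<Rightarrow> (nat \<Rightarrow> 'a \<Rightarrow> 'n \<Rightarrow> 'n \<Rightarrow> bool) \<Rightarrow>
   (nat \<Rightarrow> 'n \<Rightarrow> 'n \<Rightarrow> 'a \<Rightarrow> real) \<Rightarrow> (nat \<Rightarrow> real) \<Rightarrow> real \<Rightarrow>
   nat \<Rightarrow> 'a \<Rightarrow> 'n \<Rightarrow> real" where
  "qc_state x0 A \<nu> \<alpha> \<Delta> 0 \<omega> = x0"
| "qc_state x0 A \<nu> \<alpha> \<Delta> (Suc i) \<omega> =
     (\<lambda>n. (1 - \<alpha> i * real (degree (A i \<omega>) n)) * qc_state x0 A \<nu> \<alpha> \<Delta> i \<omega> n
          + \<alpha> i * (\<Sum>l\<in>nbhd (A i \<omega>) n. quant \<Delta> (qc_state x0 A \<nu> \<alpha> \<Delta> i \<omega> l + \<nu> i n l \<omega>)))"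

definition avg :: "('n::finite \<Rightarrow> real) \<Rightarrow> real" where
  "avg v = (\<Sum>n\<in>UNIV. v n) / real CARD('n)"

text \<open>Realizable edges: unordered edges {n,l} present with positive probability
  (the graphs are identically distributed, so time 0 suffices).\<close>
definition realizable_edges ::
  "'a measure \<Rightarrow> (nat \<Rightarrow> 'a \<Rightarrow> 'n \<Rightarrow> 'n \<Rightarrow> bool) \<Rightarrow> 'n set set" where
  "realizable_edges M A =
     {{n, l} | n l. n \<noteq> l \<and> measure M {\<omega> \<in> space M. A 0 \<omega> n l} > 0}"

end

theory Submission
  imports Defs
begin

text \<open>
  Write \<open>S j\<close> for the network average at time \<open>j\<close>. Along every sample path,
  \<open>S (j+1) = S j + \<alpha> j / N * (sum of the quantization errors e(j,n,l) over directed edges)\<close>,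
  because on a symmetric graph the Laplacian part of the update preserves the sum of the states.
  Subtractive dithering gives each error mean zero and second moment at most \<open>\<Delta>\<^sup>2/4\<close> given
  everything except its own dither; hence \<open>S\<close> has orthogonal increments and
  \<open>E (S n)\<^sup>2 \<le> S 0\<^sup>2 + |M| \<Delta>\<^sup>2 / (2 N\<^sup>2) * \<Sum>\<^sub>j \<alpha> j\<^sup>2 =: B\<close>. Kolmogorov's maximal inequality and
  continuity of measure give \<open>P(sup |S| > a) \<le> B / a\<^sup>2\<close>, and since a probability is at most 1
  this implies \<open>P \<le> \<surd>B / a\<close>. The constant \<open>1/2\<close> obtained here is below the stated \<open>2/3\<close>.
\<close>

section \<open>Subtractively dithered quantization\<close>

text \<open>Clipping a dither to the quantization cell. Dithers lie in the cell almost surely, so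
  clipping changes nothing there, but it makes every path quantity bounded.\<close>

definition clip :: "real \<Rightarrow> real \<Rightarrow> real" where
  "clip \<Delta> v = max (-\<Delta>/2) (min (\<Delta>/2) v)"

lemma quant_measurable[measurable]: "quant \<Delta> \<in> borel_measurable borel"
  unfolding quant_def by measurable

lemma clip_measurable[measurable]: "clip \<Delta> \<in> borel_measurable borel"
  unfolding clip_def by measurable

lemma clip_bound: "\<Delta> > 0 \<Longrightarrow> \<bar>clip \<Delta> v\<bar> \<le> \<Delta>/2"
  by (simp add: clip_def)

text \<open>The quantizer rounds to the nearest multiple of \<open>\<Delta>\<close>.\<close>

lemma quant_error_bound:
  assumes "\<Delta> > 0" shows "\<bar>quant \<Delta> z - z\<bar> \<le> \<Delta>/2"
proof -
  define k where "k = \<lfloor>z/\<Delta> + 1/2\<rfloor>"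
  have "\<bar>of_int k - z/\<Delta>\<bar> \<le> 1/2"
    unfolding k_def by linarith
  then have "\<Delta> * \<bar>of_int k - z/\<Delta>\<bar> \<le> \<Delta>/2"
    using assms by (simp add: mult_left_le)
  moreover have "quant \<Delta> z - z = \<Delta> * (of_int k - z/\<Delta>)"
    using assms by (simp add: quant_def k_def field_simps)
  ultimately show ?thesis
    using assms by (simp add: abs_mult)
qed

lemma quant_error_step:
  fixes y :: real
  assumes D: "\<Delta> > 0" and v: "-\<Delta>/2 \<le> v" "v < \<Delta>/2"
  defines "f \<equiv> frac (y/\<Delta>)"
  shows "quant \<Delta> (y + v) - y = (if v < (1 - f) * \<Delta> - \<Delta>/2 then - f * \<Delta> else (1 - f) * \<Delta>)"
proof -
  define k where "k = \<lfloor>y/\<Delta>\<rfloor>"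
  define t where "t = (v + \<Delta>/2)/\<Delta>"
  have yk: "y/\<Delta> = of_int k + f" unfolding f_def k_def frac_def by simp
  have f01: "0 \<le> f" "f < 1" unfolding f_def by (simp_all add: frac_lt_1)
  have t01: "0 \<le> t" "t < 1" using D v unfolding t_def by (simp_all add: field_simps)
  have arg: "(y + v)/\<Delta> + 1/2 = of_int k + (f + t)"
    using D yk unfolding t_def by (simp add: field_simps)
  have cond: "v < (1 - f) * \<Delta> - \<Delta>/2 \<longleftrightarrow> f + t < 1"
    using D unfolding t_def by (simp add: field_simps)
  have fl: "\<lfloor>(y + v)/\<Delta> + 1/2\<rfloor> = (if f + t < 1 then k else k + 1)"
    unfolding arg using f01 t01 by (intro floor_unique) auto
  have q: "quant \<Delta> (y + v) = \<Delta> * of_int (if f + t < 1 then k else k + 1)"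
    unfolding quant_def fl ..
  have yd: "y = \<Delta> * (of_int k + f)"
    using D yk by (simp add: field_simps)
  show ?thesis
    using q yd cond by (cases "f + t < 1") (simp_all add: algebra_simps)
qed

lemma integral_uniform_step:
  fixes \<Delta> v0 c1 c2 :: real and h :: "real \<Rightarrow> real"
  assumes D: "\<Delta> > 0" and v0: "-\<Delta>/2 \<le> v0" "v0 \<le> \<Delta>/2"
    and hm: "h \<in> borel_measurable borel"
    and h: "\<And>v. -\<Delta>/2 \<le> v \<Longrightarrow> v < \<Delta>/2 \<Longrightarrow> h v = (if v < v0 then c1 else c2)"
  shows "(\<integral>v. h v \<partial>uniform_measure lborel {-\<Delta>/2..<\<Delta>/2})
         = c1 * ((v0 + \<Delta>/2)/\<Delta>) + c2 * ((\<Delta>/2 - v0)/\<Delta>)"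
proof -
  let ?U = "uniform_measure lborel {-\<Delta>/2..<\<Delta>/2}"
  interpret U: prob_space ?U using D by (intro prob_space_uniform_measure) auto
  have ind_int: "integrable ?U (\<lambda>v. c * indicat_real S v)" if "S \<in> sets borel" for c S
    using that by (intro integrable_mult_right U.integrable_const_bound[where B=1]) (auto simp: indicator_def)
  have "AE v in ?U. h v = c1 * indicator {-\<Delta>/2..<v0} v + c2 * indicator {v0..<\<Delta>/2} v"
    by (rule AE_uniform_measureI) (auto simp: h indicator_def)
  then have "(\<integral>v. h v \<partial>?U) = (\<integral>v. c1 * indicator {-\<Delta>/2..<v0} v + c2 * indicator {v0..<\<Delta>/2} v \<partial>?U)"
    using hm by (intro integral_cong_AE) (auto simp: measurable_cong_sets[OF sets_uniform_measure refl])
  also have "\<dots> = c1 * measure ?U {-\<Delta>/2..<v0} + c2 * measure ?U {v0..<\<Delta>/2}"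
    by (subst Bochner_Integration.integral_add[OF ind_int ind_int]) auto
  also have "measure ?U {-\<Delta>/2..<v0} = (v0 + \<Delta>/2)/\<Delta>"
    using D v0 by (subst measure_uniform_measure) (auto simp: ennreal_neq_top)
  also have "measure ?U {v0..<\<Delta>/2} = (\<Delta>/2 - v0)/\<Delta>"
    using D v0 by (subst measure_uniform_measure) (auto simp: Int_absorb1)
  finally show ?thesis .
qed

lemma dithered_quant_error:
  fixes \<Delta> y :: real
  assumes D: "\<Delta> > 0"
  defines "U \<equiv> uniform_measure lborel {-\<Delta>/2..<\<Delta>/2}" and "f \<equiv> frac (y/\<Delta>)"
  shows "(\<integral>v. quant \<Delta> (y + clip \<Delta> v) - y \<partial>U) = 0"
    and "(\<integral>v. (quant \<Delta> (y + clip \<Delta> v) - y)\<^sup>2 \<partial>U) = \<Delta>\<^sup>2 * (f * (1 - f))"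
proof -
  define v0 where "v0 = (1 - f) * \<Delta> - \<Delta>/2"
  have f01: "0 \<le> f" "f < 1" unfolding f_def by (simp_all add: frac_lt_1)
  have v0e: "v0 + \<Delta>/2 = (1 - f) * \<Delta>" "\<Delta>/2 - v0 = f * \<Delta>"
    unfolding v0_def by (simp_all add: algebra_simps)
  have "0 \<le> f * \<Delta>" "0 \<le> (1 - f) * \<Delta>"
    using f01 D by simp_all
  then have v0b: "-\<Delta>/2 \<le> v0" "v0 \<le> \<Delta>/2"
    using v0e by linarith+
  have step: "quant \<Delta> (y + clip \<Delta> v) - y = (if v < v0 then - f * \<Delta> else (1 - f) * \<Delta>)"
    if "-\<Delta>/2 \<le> v" "v < \<Delta>/2" for v
    using quant_error_step[OF D that, of y] that unfolding v0_def f_def by (simp add: clip_def)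
  have "(\<integral>v. quant \<Delta> (y + clip \<Delta> v) - y \<partial>U)
      = (- f * \<Delta>) * ((v0 + \<Delta>/2)/\<Delta>) + ((1 - f) * \<Delta>) * ((\<Delta>/2 - v0)/\<Delta>)"
    unfolding U_def by (rule integral_uniform_step[OF D v0b]) (measurable, simp add: step)
  also have "\<dots> = 0" using D by (simp add: v0e)
  finally show "(\<integral>v. quant \<Delta> (y + clip \<Delta> v) - y \<partial>U) = 0" .
  have "(\<integral>v. (quant \<Delta> (y + clip \<Delta> v) - y)\<^sup>2 \<partial>U)
      = (- f * \<Delta>)\<^sup>2 * ((v0 + \<Delta>/2)/\<Delta>) + ((1 - f) * \<Delta>)\<^sup>2 * ((\<Delta>/2 - v0)/\<Delta>)"
    unfolding U_def by (rule integral_uniform_step[OF D v0b]) (measurable, simp add: step)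
  also have "\<dots> = \<Delta>\<^sup>2 * (f * (1 - f))"
    using D by (simp add: v0e power2_eq_square field_simps)
  finally show "(\<integral>v. (quant \<Delta> (y + clip \<Delta> v) - y)\<^sup>2 \<partial>U) = \<Delta>\<^sup>2 * (f * (1 - f))" .
qed

section \<open>Bounded measurable functions\<close>

text \<open>All random quantities of the argument are bounded, which makes every product of them
  integrable; this predicate tracks that.\<close>

definition bounded_measurable :: "'a measure \<Rightarrow> ('a \<Rightarrow> real) \<Rightarrow> bool" where
  "bounded_measurable N f \<longleftrightarrow> f \<in> borel_measurable N \<and> (\<exists>C. \<forall>x\<in>space N. \<bar>f x\<bar> \<le> C)"

lemma bounded_measurableI:
  "f \<in> borel_measurable N \<Longrightarrow> (\<And>x. x \<in> space N \<Longrightarrow> \<bar>f x\<bar> \<le> C) \<Longrightarrow> bounded_measurable N f"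
  unfolding bounded_measurable_def by blast

lemma bounded_measurable_const: "bounded_measurable N (\<lambda>x. c)"
  by (rule bounded_measurableI[where C="\<bar>c\<bar>"]) auto

lemma bounded_measurable_of_bool: "Measurable.pred N P \<Longrightarrow> bounded_measurable N (\<lambda>x. of_bool (P x))"
  by (rule bounded_measurableI[where C=1]) auto

lemma bounded_measurable_add:
  assumes "bounded_measurable N f" "bounded_measurable N g"
  shows "bounded_measurable N (\<lambda>x. f x + g x)"
proof -
  obtain C D where C: "\<forall>x\<in>space N. \<bar>f x\<bar> \<le> C" and D: "\<forall>x\<in>space N. \<bar>g x\<bar> \<le> D"
    using assms unfolding bounded_measurable_def by blast
  have "\<bar>f x + g x\<bar> \<le> C + D" if "x \<in> space N" for x
    using C D that abs_triangle_ineq[of "f x" "g x"] by force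
  then show ?thesis
    using assms unfolding bounded_measurable_def by auto
qed

lemma bounded_measurable_mult:
  assumes "bounded_measurable N f" "bounded_measurable N g"
  shows "bounded_measurable N (\<lambda>x. f x * g x)"
proof -
  obtain C D where C: "\<forall>x\<in>space N. \<bar>f x\<bar> \<le> C" and D: "\<forall>x\<in>space N. \<bar>g x\<bar> \<le> D"
    using assms unfolding bounded_measurable_def by blast
  have "\<bar>f x * g x\<bar> \<le> C * D" if "x \<in> space N" for x
    unfolding abs_mult using C D that by (intro mult_mono) (auto intro: order_trans[OF abs_ge_zero])
  then show ?thesis
    using assms unfolding bounded_measurable_def by auto
qed

lemma bounded_measurable_diff:
  assumes "bounded_measurable N f" "bounded_measurable N g"
  shows "bounded_measurable N (\<lambda>x. f x - g x)"
  using bounded_measurable_add[OF assms(1) bounded_measurable_mult[OF bounded_measurable_const assms(2)],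
      of "-1"]
  by simp

lemma bounded_measurable_sum:
  "finite I \<Longrightarrow> (\<And>i. i \<in> I \<Longrightarrow> bounded_measurable N (f i)) \<Longrightarrow> bounded_measurable N (\<lambda>x. \<Sum>i\<in>I. f i x)"
  by (induction I rule: finite_induct) (simp_all add: bounded_measurable_const bounded_measurable_add)

lemma bounded_measurable_cong_sets:
  assumes "sets N = sets N'" shows "bounded_measurable N f \<longleftrightarrow> bounded_measurable N' f"
  unfolding bounded_measurable_def measurable_cong_sets[OF assms refl] sets_eq_imp_space_eq[OF assms] ..

lemma bounded_measurable_compose:
  assumes f: "bounded_measurable N f" and g: "g \<in> measurable M N"
  shows "bounded_measurable M (\<lambda>x. f (g x))"
proof -
  obtain C where "f \<in> borel_measurable N" "\<forall>x\<in>space N. \<bar>f x\<bar> \<le> C"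
    using f unfolding bounded_measurable_def by blast
  then show ?thesis
    using measurable_space[OF g] measurable_compose[OF g]
    by (intro bounded_measurableI[where C=C]) auto
qed

lemma (in finite_measure) bounded_measurable_integrable:
  assumes "bounded_measurable M f" shows "integrable M f"
proof -
  obtain C where "f \<in> borel_measurable M" "\<forall>x\<in>space M. \<bar>f x\<bar> \<le> C"
    using assms unfolding bounded_measurable_def by blast
  then show ?thesis
    by (intro integrable_const_bound[where B=C] AE_I2) auto
qed

lemmas bounded_measurable_intros =
  bounded_measurable_const bounded_measurable_of_bool bounded_measurable_add
  bounded_measurable_diff bounded_measurable_mult bounded_measurable_sum

section \<open>Independence of two random variables\<close>

text \<open>The library's \<open>indep_var\<close> requires both variables to take values in the same type;
  here the graph sequence, the dither family and single dithers live in different spaces, so we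
  use the classical definition: the joint probabilities of events factor.\<close>

context prob_space
begin

definition indep_pair :: "'b measure \<Rightarrow> ('a \<Rightarrow> 'b) \<Rightarrow> 'c measure \<Rightarrow> ('a \<Rightarrow> 'c) \<Rightarrow> bool" where
  "indep_pair S X T Y \<longleftrightarrow> random_variable S X \<and> random_variable T Y \<and>
     (\<forall>A\<in>sets S. \<forall>B\<in>sets T.
        prob (X -` A \<inter> Y -` B \<inter> space M) = prob (X -` A \<inter> space M) * prob (Y -` B \<inter> space M))"

text \<open>Independence of the generated \<open>\<sigma>\<close>-algebras, the form in which the model is stated.\<close>

lemma indep_pair_vimage_algebra:
  assumes X: "random_variable S X" and Y: "random_variable T Y"
    and ind: "indep_set (sets (vimage_algebra (space M) X S)) (sets (vimage_algebra (space M) Y T))"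
  shows "indep_pair S X T Y"
  unfolding indep_pair_def
proof (intro conjI ballI X Y)
  fix A B assume A: "A \<in> sets S" and B: "B \<in> sets T"
  have "X -` A \<inter> space M \<in> sets (vimage_algebra (space M) X S)"
    using A measurable_space[OF X] by (subst sets_vimage_algebra2) auto
  moreover have "Y -` B \<inter> space M \<in> sets (vimage_algebra (space M) Y T)"
    using B measurable_space[OF Y] by (subst sets_vimage_algebra2) auto
  ultimately have "prob ((X -` A \<inter> space M) \<inter> (Y -` B \<inter> space M))
      = prob (X -` A \<inter> space M) * prob (Y -` B \<inter> space M)"
    using ind unfolding indep_sets2_eq by blast
  then show "prob (X -` A \<inter> Y -` B \<inter> space M) = prob (X -` A \<inter> space M) * prob (Y -` B \<inter> space M)"
    by (simp add: Int_ac)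
qed

lemma indep_pair_of_indep_var:
  assumes "indep_var S X T Y" shows "indep_pair S X T Y"
proof (rule indep_pair_vimage_algebra)
  show "random_variable S X" "random_variable T Y"
    using assms by (blast dest: indep_var_rv1 indep_var_rv2)+
  show "indep_set (sets (vimage_algebra (space M) X S)) (sets (vimage_algebra (space M) Y T))"
    using assms unfolding indep_var_eq sets_vimage_algebra by blast
qed

lemma indep_pair_compose:
  assumes ind: "indep_pair S X T Y" and f: "f \<in> measurable S S'" and g: "g \<in> measurable T T'"
  shows "indep_pair S' (\<lambda>\<omega>. f (X \<omega>)) T' (\<lambda>\<omega>. g (Y \<omega>))"
  unfolding indep_pair_def
proof (intro conjI ballI)
  have X: "random_variable S X" and Y: "random_variable T Y"
    using ind by (auto simp: indep_pair_def)
  show "random_variable S' (\<lambda>\<omega>. f (X \<omega>))" "random_variable T' (\<lambda>\<omega>. g (Y \<omega>))"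
    using measurable_compose X f Y g by blast+
  fix A B assume A: "A \<in> sets S'" and B: "B \<in> sets T'"
  let ?A = "f -` A \<inter> space S" and ?B = "g -` B \<inter> space T"
  have "?A \<in> sets S" "?B \<in> sets T"
    using measurable_sets f A g B by blast+
  then have "prob (X -` ?A \<inter> Y -` ?B \<inter> space M) = prob (X -` ?A \<inter> space M) * prob (Y -` ?B \<inter> space M)"
    using ind unfolding indep_pair_def by blast
  moreover have "X -` ?A \<inter> Y -` ?B \<inter> space M = (\<lambda>\<omega>. f (X \<omega>)) -` A \<inter> (\<lambda>\<omega>. g (Y \<omega>)) -` B \<inter> space M"
    "X -` ?A \<inter> space M = (\<lambda>\<omega>. f (X \<omega>)) -` A \<inter> space M"
    "Y -` ?B \<inter> space M = (\<lambda>\<omega>. g (Y \<omega>)) -` B \<inter> space M"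
    using measurable_space[OF X] measurable_space[OF Y] by auto
  ultimately show "prob ((\<lambda>\<omega>. f (X \<omega>)) -` A \<inter> (\<lambda>\<omega>. g (Y \<omega>)) -` B \<inter> space M) =
      prob ((\<lambda>\<omega>. f (X \<omega>)) -` A \<inter> space M) * prob ((\<lambda>\<omega>. g (Y \<omega>)) -` B \<inter> space M)"
    by (simp only:)
qed

lemma indep_pair_joint_distr:
  assumes ind: "indep_pair S X T Y"
  shows "distr M S X \<Otimes>\<^sub>M distr M T Y = distr M (S \<Otimes>\<^sub>M T) (\<lambda>\<omega>. (X \<omega>, Y \<omega>))"
proof -
  have X: "random_variable S X" and Y: "random_variable T Y"
    and fac: "\<And>A B. A \<in> sets S \<Longrightarrow> B \<in> sets T \<Longrightarrow> emeasure M (X -` A \<inter> Y -` B \<inter> space M)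
               = emeasure M (X -` A \<inter> space M) * emeasure M (Y -` B \<inter> space M)"
    using ind by (auto simp: indep_pair_def emeasure_eq_measure ennreal_mult)
  have XY: "random_variable (S \<Otimes>\<^sub>M T) (\<lambda>\<omega>. (X \<omega>, Y \<omega>))"
    using X Y by (rule measurable_Pair)
  interpret X: prob_space "distr M S X" using X by (rule prob_space_distr)
  interpret Y: prob_space "distr M T Y" using Y by (rule prob_space_distr)
  interpret XY: pair_prob_space "distr M S X" "distr M T Y" ..
  show ?thesis
  proof (rule pair_measure_eqI)
    show "sigma_finite_measure (distr M S X)" "sigma_finite_measure (distr M T Y)" ..
    fix A B assume A: "A \<in> sets (distr M S X)" and B: "B \<in> sets (distr M T Y)"
    have "emeasure (distr M (S \<Otimes>\<^sub>M T) (\<lambda>\<omega>. (X \<omega>, Y \<omega>))) (A \<times> B)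
        = emeasure M ((\<lambda>\<omega>. (X \<omega>, Y \<omega>)) -` (A \<times> B) \<inter> space M)"
      using A B by (intro emeasure_distr[OF XY]) auto
    also have "(\<lambda>\<omega>. (X \<omega>, Y \<omega>)) -` (A \<times> B) \<inter> space M = X -` A \<inter> Y -` B \<inter> space M"
      by auto
    also have "emeasure M \<dots> = emeasure (distr M S X) A * emeasure (distr M T Y) B"
      using X Y A B by (simp add: fac emeasure_distr)
    finally show "emeasure (distr M S X) A * emeasure (distr M T Y) B
        = emeasure (distr M (S \<Otimes>\<^sub>M T) (\<lambda>\<omega>. (X \<omega>, Y \<omega>))) (A \<times> B)" ..
  qed simp
qed

lemma integral_indep_pair:
  fixes G :: "'b \<times> 'c \<Rightarrow> real"
  assumes ind: "indep_pair S X T Y" and G: "bounded_measurable (S \<Otimes>\<^sub>M T) G"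
  shows "(\<integral>\<omega>. G (X \<omega>, Y \<omega>) \<partial>M) = (\<integral>x. (\<integral>y. G (x, y) \<partial>distr M T Y) \<partial>distr M S X)"
proof -
  have X: "random_variable S X" and Y: "random_variable T Y"
    using ind by (auto simp: indep_pair_def)
  interpret X: prob_space "distr M S X" using X by (rule prob_space_distr)
  interpret Y: prob_space "distr M T Y" using Y by (rule prob_space_distr)
  interpret XY: pair_prob_space "distr M S X" "distr M T Y" ..
  have G': "bounded_measurable (distr M S X \<Otimes>\<^sub>M distr M T Y) G"
    using G by (subst bounded_measurable_cong_sets[of _ "S \<Otimes>\<^sub>M T"]) (auto intro: sets_pair_measure_cong)
  have "(\<integral>\<omega>. G (X \<omega>, Y \<omega>) \<partial>M) = (\<integral>p. G p \<partial>distr M (S \<Otimes>\<^sub>M T) (\<lambda>\<omega>. (X \<omega>, Y \<omega>)))"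
    using G by (intro integral_distr[symmetric] measurable_Pair X Y) (simp add: bounded_measurable_def)
  also have "\<dots> = (\<integral>p. G p \<partial>(distr M S X \<Otimes>\<^sub>M distr M T Y))"
    unfolding indep_pair_joint_distr[OF ind] ..
  also have "\<dots> = (\<integral>x. (\<integral>y. G (x, y) \<partial>distr M T Y) \<partial>distr M S X)"
    by (rule XY.integral_fst'[symmetric]) (rule XY.P.bounded_measurable_integrable[OF G'])
  finally show ?thesis .
qed

end

section \<open>Kolmogorov's maximal inequality\<close>

definition first_exceedance :: "real \<Rightarrow> (nat \<Rightarrow> real) \<Rightarrow> nat \<Rightarrow> bool" where
  "first_exceedance c s k \<longleftrightarrow> c < \<bar>s k\<bar> \<and> (\<forall>i<k. \<bar>s i\<bar> \<le> c)"

lemma sum_first_exceedance: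
  "(\<Sum>k\<le>n. of_bool (first_exceedance c s k) :: real) = of_bool (\<exists>j\<le>n. c < \<bar>s j\<bar>)"
proof (induction n)
  case (Suc n)
  show ?case
  proof (cases "\<exists>j\<le>n. c < \<bar>s j\<bar>")
    case True
    then have "\<not> first_exceedance c s (Suc n)"
      by (auto simp: first_exceedance_def less_Suc_eq_le)
    then show ?thesis
      using Suc True le_Suc_eq by auto
  next
    case False
    then have "first_exceedance c s (Suc n) \<longleftrightarrow> (\<exists>j\<le>Suc n. c < \<bar>s j\<bar>)"
      by (auto simp: first_exceedance_def less_Suc_eq_le le_Suc_eq)
    then show ?thesis
      using Suc False by simp
  qed
qed (simp add: first_exceedance_def)

lemma first_exceedance_measurable:
  assumes "k \<le> m"
  shows "Measurable.pred (PiM {..m} (\<lambda>_. borel)) (\<lambda>x. first_exceedance c x k)"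
proof -
  have comp[measurable]: "(\<lambda>x. x i) \<in> borel_measurable (PiM {..m} (\<lambda>_. borel))" if "i \<le> k" for i
    using that assms by (intro measurable_component_singleton) auto
  have "(\<lambda>x. first_exceedance c x k) = (\<lambda>x. c < \<bar>x k\<bar> \<and> (\<forall>i\<in>{..<k}. \<bar>x i\<bar> \<le> c))"
    unfolding first_exceedance_def by auto
  then show ?thesis
    by simp measurable
qed

context prob_space
begin

text \<open>Square-integrable
  martingales have this property, and it is all that Kolmogorov's inequality needs.\<close>

definition orthogonal_increments :: "(nat \<Rightarrow> 'a \<Rightarrow> real) \<Rightarrow> bool" where
  "orthogonal_increments S \<longleftrightarrow> (\<forall>m. \<forall>B\<in>sets (PiM {..m} (\<lambda>_. borel)).
     (\<integral>\<omega>. indicator B (\<lambda>j\<in>{..m}. S j \<omega>) * S m \<omega> * (S (Suc m) \<omega> - S m \<omega>) \<partial>M) = 0)"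

lemma integral_weighted_square_increment:
  fixes w X Y :: "'a \<Rightarrow> real"
  assumes w: "bounded_measurable M w" and X: "bounded_measurable M X" and Y: "bounded_measurable M Y"
    and orth: "(\<integral>\<omega>. w \<omega> * X \<omega> * (Y \<omega> - X \<omega>) \<partial>M) = 0"
  shows "(\<integral>\<omega>. w \<omega> * (Y \<omega>)\<^sup>2 \<partial>M) = (\<integral>\<omega>. w \<omega> * (X \<omega>)\<^sup>2 \<partial>M) + (\<integral>\<omega>. w \<omega> * (Y \<omega> - X \<omega>)\<^sup>2 \<partial>M)"
proof -
  have int: "integrable M (\<lambda>\<omega>. w \<omega> * (X \<omega> * X \<omega>))"
    "integrable M (\<lambda>\<omega>. 2 * (w \<omega> * X \<omega> * (Y \<omega> - X \<omega>)))"
    "integrable M (\<lambda>\<omega>. w \<omega> * ((Y \<omega> - X \<omega>) * (Y \<omega> - X \<omega>)))"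
    by (intro bounded_measurable_integrable bounded_measurable_intros w X Y)+
  have "(\<integral>\<omega>. w \<omega> * (Y \<omega>)\<^sup>2 \<partial>M)
      = (\<integral>\<omega>. w \<omega> * (X \<omega>)\<^sup>2 + 2 * (w \<omega> * X \<omega> * (Y \<omega> - X \<omega>)) + w \<omega> * (Y \<omega> - X \<omega>)\<^sup>2 \<partial>M)"
    by (intro Bochner_Integration.integral_cong) (simp_all add: power2_eq_square algebra_simps)
  also have "\<dots> = (\<integral>\<omega>. w \<omega> * (X \<omega>)\<^sup>2 \<partial>M) + 2 * (\<integral>\<omega>. w \<omega> * X \<omega> * (Y \<omega> - X \<omega>) \<partial>M)
      + (\<integral>\<omega>. w \<omega> * (Y \<omega> - X \<omega>)\<^sup>2 \<partial>M)"
    using int by (simp add: power2_eq_square)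
  finally show ?thesis
    using orth by simp
qed

lemma orthogonal_increments_square:
  assumes S: "\<And>j. bounded_measurable M (S j)" and orth: "orthogonal_increments S"
  shows "(\<integral>\<omega>. (S (Suc m) \<omega>)\<^sup>2 \<partial>M) = (\<integral>\<omega>. (S m \<omega>)\<^sup>2 \<partial>M) + (\<integral>\<omega>. (S (Suc m) \<omega> - S m \<omega>)\<^sup>2 \<partial>M)"
proof -
  have "(\<integral>\<omega>. 1 * S m \<omega> * (S (Suc m) \<omega> - S m \<omega>) \<partial>M) = 0"
    using orth unfolding orthogonal_increments_def
    by (auto dest!: spec[of _ m] bspec[of _ _ "space (PiM {..m} (\<lambda>_. borel))"] simp: space_PiM)
  then show ?thesis
    using integral_weighted_square_increment[where w="\<lambda>_. 1", OF bounded_measurable_const S S] by simp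
qed

lemma first_exceedance_second_moment_mono:
  assumes S: "\<And>j. bounded_measurable M (S j)" and orth: "orthogonal_increments S" and "k \<le> m"
  shows "(\<integral>\<omega>. of_bool (first_exceedance c (\<lambda>j. S j \<omega>) k) * (S k \<omega>)\<^sup>2 \<partial>M)
       \<le> (\<integral>\<omega>. of_bool (first_exceedance c (\<lambda>j. S j \<omega>) k) * (S m \<omega>)\<^sup>2 \<partial>M)"
  using \<open>k \<le> m\<close>
proof (induction m rule: dec_induct)
  case (step m)
  define F where "F \<omega> = (of_bool (first_exceedance c (\<lambda>j. S j \<omega>) k) :: real)" for \<omega>
  define B where "B = {x \<in> space (PiM {..m} (\<lambda>_. borel)). first_exceedance c x k}"
  have "B \<in> sets (PiM {..m} (\<lambda>_. borel))"
    unfolding B_def using first_exceedance_measurable[of k m c] step by measurable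
  then have "(\<integral>\<omega>. indicator B (\<lambda>j\<in>{..m}. S j \<omega>) * S m \<omega> * (S (Suc m) \<omega> - S m \<omega>) \<partial>M) = 0"
    using orth unfolding orthogonal_increments_def by blast
  moreover have "indicator B (\<lambda>j\<in>{..m}. S j \<omega>) = F \<omega>" for \<omega>
    using step unfolding B_def F_def first_exceedance_def by (auto simp: space_PiM indicator_def)
  ultimately have orth_m: "(\<integral>\<omega>. F \<omega> * S m \<omega> * (S (Suc m) \<omega> - S m \<omega>) \<partial>M) = 0"
    by simp
  have S_meas[measurable]: "S j \<in> borel_measurable M" for j
    using S unfolding bounded_measurable_def by blast
  have F: "bounded_measurable M F"
    unfolding F_def first_exceedance_def by (intro bounded_measurable_of_bool) measurable
  have "0 \<le> (\<integral>\<omega>. F \<omega> * (S (Suc m) \<omega> - S m \<omega>)\<^sup>2 \<partial>M)"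
    unfolding F_def by (intro integral_nonneg_AE) auto
  then have "(\<integral>\<omega>. F \<omega> * (S m \<omega>)\<^sup>2 \<partial>M) \<le> (\<integral>\<omega>. F \<omega> * (S (Suc m) \<omega>)\<^sup>2 \<partial>M)"
    using integral_weighted_square_increment[OF F S S orth_m] by simp
  then show ?case
    using step.IH unfolding F_def by simp
qed simp

text \<open>Kolmogorov's maximal inequality: splitting according to the first exceedance time \<open>k\<close>, the
  second moment on each piece is at least \<open>c\<^sup>2\<close> times its probability and grows up to time \<open>n\<close>.\<close>

theorem kolmogorov_maximal_inequality:
  assumes S: "\<And>j. bounded_measurable M (S j)" and orth: "orthogonal_increments S" and c: "0 < c"
  shows "c\<^sup>2 * prob {\<omega> \<in> space M. \<exists>j\<le>n. c < \<bar>S j \<omega>\<bar>} \<le> (\<integral>\<omega>. (S n \<omega>)\<^sup>2 \<partial>M)"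
proof -
  define F where "F k \<omega> = (of_bool (first_exceedance c (\<lambda>j. S j \<omega>) k) :: real)" for k \<omega>
  have S_meas[measurable]: "S j \<in> borel_measurable M" for j
    using S unfolding bounded_measurable_def by blast
  have F: "bounded_measurable M (F k)" for k
    unfolding F_def first_exceedance_def by (intro bounded_measurable_of_bool) measurable
  have int: "integrable M (\<lambda>\<omega>. F k \<omega> * (S j \<omega>)\<^sup>2)" for k j
    unfolding power2_eq_square by (intro bounded_measurable_integrable bounded_measurable_intros F S)
  have sumF: "(\<Sum>k\<le>n. F k \<omega>) = indicator {\<omega> \<in> space M. \<exists>j\<le>n. c < \<bar>S j \<omega>\<bar>} \<omega>" if "\<omega> \<in> space M" for \<omega>
    using that unfolding F_def sum_first_exceedance by (simp add: indicator_def)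
  have "c\<^sup>2 * prob {\<omega> \<in> space M. \<exists>j\<le>n. c < \<bar>S j \<omega>\<bar>} = (\<Sum>k\<le>n. \<integral>\<omega>. c\<^sup>2 * F k \<omega> \<partial>M)"
    using F by (simp add: sumF bounded_measurable_integrable flip: Bochner_Integration.integral_sum
        sum_distrib_left cong: Bochner_Integration.integral_cong)
  also have "\<dots> \<le> (\<Sum>k\<le>n. \<integral>\<omega>. F k \<omega> * (S k \<omega>)\<^sup>2 \<partial>M)"
  proof (intro sum_mono integral_mono int)
    show "integrable M (\<lambda>\<omega>. c\<^sup>2 * F k \<omega>)" for k
      using F by (simp add: bounded_measurable_integrable)
    have "c\<^sup>2 \<le> (S k \<omega>)\<^sup>2" if "c < \<bar>S k \<omega>\<bar>" for k \<omega>
      using that c by (metis abs_ge_zero less_imp_le power2_abs power_mono)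
    then show "c\<^sup>2 * F k \<omega> \<le> F k \<omega> * (S k \<omega>)\<^sup>2" for k \<omega>
      by (auto simp: F_def first_exceedance_def)
  qed
  also have "\<dots> \<le> (\<Sum>k\<le>n. \<integral>\<omega>. F k \<omega> * (S n \<omega>)\<^sup>2 \<partial>M)"
    unfolding F_def by (intro sum_mono first_exceedance_second_moment_mono S orth) simp
  also have "\<dots> = (\<integral>\<omega>. (\<Sum>k\<le>n. F k \<omega>) * (S n \<omega>)\<^sup>2 \<partial>M)"
    using int by (simp add: sum_distrib_right)
  also have "\<dots> \<le> (\<integral>\<omega>. (S n \<omega>)\<^sup>2 \<partial>M)"
  proof (intro integral_mono)
    show "integrable M (\<lambda>\<omega>. (\<Sum>k\<le>n. F k \<omega>) * (S n \<omega>)\<^sup>2)"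
      using int by (simp add: sum_distrib_right)
    show "integrable M (\<lambda>\<omega>. (S n \<omega>)\<^sup>2)"
      unfolding power2_eq_square by (intro bounded_measurable_integrable bounded_measurable_intros S)
    show "(\<Sum>k\<le>n. F k \<omega>) * (S n \<omega>)\<^sup>2 \<le> (S n \<omega>)\<^sup>2" for \<omega>
      unfolding F_def sum_first_exceedance by simp
  qed
  finally show ?thesis .
qed

end

section \<open>The QC iteration as a function of the sample path\<close>

text \<open>A sample path consists of the sequence of graphs (adjacency relations) and the family of
  all dithers \<open>\<nu>\<^sub>n\<^sub>l(i)\<close>, indexed by \<open>(i, n, l)\<close>.\<close>

type_synonym 'n graph_seq = "nat \<Rightarrow> 'n \<Rightarrow> 'n \<Rightarrow> bool"
type_synonym 'n dither_seq = "nat \<times> 'n \<times> 'n \<Rightarrow> real"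

abbreviation graph_seqs :: "'n graph_seq measure" where
  "graph_seqs \<equiv> PiM UNIV (\<lambda>_. count_space UNIV)"

abbreviation dither_seqs :: "'n dither_seq measure" where
  "dither_seqs \<equiv> PiM UNIV (\<lambda>_. borel)"

abbreviation paths :: "('n graph_seq \<times> 'n dither_seq) measure" where
  "paths \<equiv> graph_seqs \<Otimes>\<^sub>M dither_seqs"

text \<open>Sums over a neighbourhood and degrees as sums over all nodes, which exposes their
  measurable dependence on the graph.\<close>

lemma sum_nbhd: "(\<Sum>l\<in>nbhd G n. f l) = (\<Sum>l\<in>UNIV. of_bool (G n l) * (f (l::'n::finite) :: real))"
proof -
  have "(\<Sum>l\<in>UNIV. of_bool (G n l) * f l) = (\<Sum>l\<in>UNIV. if G n l then f l else 0)"
    by (rule sum.cong) auto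
  then show ?thesis
    by (simp add: sum.If_cases nbhd_def)
qed

lemma degree_sum: "real (degree G n) = (\<Sum>l\<in>UNIV. of_bool (G n (l::'n::finite)) :: real)"
  using sum_nbhd[where G=G and n=n and f="\<lambda>_. 1"] by (simp add: degree_def)

lemma edge_measurable[measurable]: "Measurable.pred paths (\<lambda>p. fst p i n l)"
proof -
  have "(\<lambda>p. fst p i) \<in> measurable paths (count_space UNIV)"
    by measurable
  then have "(\<lambda>p. fst p i n l) \<in> measurable paths (count_space UNIV)"
    by (rule measurable_compose) simp
  from measurable_sets[OF this, of "{True}"] show ?thesis
    unfolding pred_def by (simp add: vimage_def Int_def conj_commute)
qed

locale qc_params =
  fixes x0 :: "'n::finite \<Rightarrow> real" and \<alpha> :: "nat \<Rightarrow> real" and \<Delta> :: real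
  assumes \<Delta>_pos: "0 < \<Delta>" and \<alpha>_nonneg: "\<And>i. 0 \<le> \<alpha> i"
begin

primrec qc_path :: "'n graph_seq \<Rightarrow> 'n dither_seq \<Rightarrow> nat \<Rightarrow> 'n \<Rightarrow> real" where
  "qc_path G D 0 = x0"
| "qc_path G D (Suc i) =
     (\<lambda>n. (1 - \<alpha> i * real (degree (G i) n)) * qc_path G D i n
          + \<alpha> i * (\<Sum>l\<in>nbhd (G i) n. quant \<Delta> (qc_path G D i l + clip \<Delta> (D (i, n, l)))))"

lemma qc_state_eq_qc_path:
  assumes "\<And>i n l. clip \<Delta> (\<nu> i n l \<omega>) = \<nu> i n l \<omega>"
  shows "qc_state x0 A \<nu> \<alpha> \<Delta> j \<omega> = qc_path (\<lambda>i. A i \<omega>) (\<lambda>(i, n, l). \<nu> i n l \<omega>) j"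
  by (induction j) (simp_all add: assms)

lemma qc_path_causal:
  assumes "\<And>i n l. i < j \<Longrightarrow> D (i, n, l) = D' (i, n, l)"
  shows "qc_path G D j = qc_path G D' j"
  using assms by (induction j) simp_all

lemma qc_path_measurable[measurable]:
  "(\<lambda>p. qc_path (fst p) (snd p) j n) \<in> borel_measurable paths"
proof (induction j arbitrary: n)
  case (Suc j)
  have "(\<lambda>p. qc_path (fst p) (snd p) (Suc j) n) =
     (\<lambda>p. (1 - \<alpha> j * (\<Sum>l\<in>UNIV. of_bool (fst p j n l))) * qc_path (fst p) (snd p) j n
          + \<alpha> j * (\<Sum>l\<in>UNIV. of_bool (fst p j n l)
                     * quant \<Delta> (qc_path (fst p) (snd p) j l + clip \<Delta> (snd p (j, n, l)))))"
    by (simp add: sum_nbhd degree_sum)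
  also have "\<dots> \<in> borel_measurable paths"
    using Suc by measurable
  finally show ?case .
qed simp

lemma qc_path_bounded: "\<exists>C. \<forall>G D n. \<bar>qc_path G D j n\<bar> \<le> C"
proof (induction j)
  case 0
  show ?case by (rule exI[of _ "Max (range (\<lambda>n. \<bar>x0 n\<bar>))"]) simp
next
  case (Suc j)
  then obtain C where C: "\<And>G D n. \<bar>qc_path G D j n\<bar> \<le> C" by blast
  let ?N = "real CARD('n)"
  have C0: "0 \<le> C" using C order_trans abs_ge_zero by blast
  have "\<bar>qc_path G D (Suc j) n\<bar> \<le> (1 + \<alpha> j * ?N) * C + \<alpha> j * (?N * (C + \<Delta>))" for G D n
  proof -
    let ?x = "qc_path G D j"
    have d: "real (degree (G j) n) \<le> ?N"
      unfolding degree_def by (simp add: card_mono)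
    have "\<bar>1 - \<alpha> j * real (degree (G j) n)\<bar> \<le> 1 + \<alpha> j * ?N"
      using \<alpha>_nonneg[of j] d by (smt (verit) mult_left_mono of_nat_0_le_iff zero_le_mult_iff)
    then have t1: "\<bar>(1 - \<alpha> j * real (degree (G j) n)) * ?x n\<bar> \<le> (1 + \<alpha> j * ?N) * C"
      unfolding abs_mult using C[of G D n] C0 by (intro mult_mono) auto
    have q: "\<bar>quant \<Delta> (?x l + clip \<Delta> (D (j, n, l)))\<bar> \<le> C + \<Delta>" for l
      using quant_error_bound[OF \<Delta>_pos, of "?x l + clip \<Delta> (D (j, n, l))"]
        clip_bound[OF \<Delta>_pos, of "D (j, n, l)"] C[of G D l] by linarith
    have "\<bar>\<Sum>l\<in>nbhd (G j) n. quant \<Delta> (?x l + clip \<Delta> (D (j, n, l)))\<bar> \<le> (\<Sum>l\<in>nbhd (G j) n. C + \<Delta>)"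
      by (rule order_trans[OF sum_abs sum_mono]) (rule q)
    also have "\<dots> = real (degree (G j) n) * (C + \<Delta>)"
      by (simp add: degree_def)
    also have "\<dots> \<le> ?N * (C + \<Delta>)"
      using d C0 \<Delta>_pos by (intro mult_right_mono) auto
    finally have t2: "\<bar>\<alpha> j * (\<Sum>l\<in>nbhd (G j) n. quant \<Delta> (?x l + clip \<Delta> (D (j, n, l))))\<bar> \<le> \<alpha> j * (?N * (C + \<Delta>))"
      unfolding abs_mult using \<alpha>_nonneg[of j] by (simp add: mult_left_mono)
    show ?thesis
      using t1 t2 by simp
  qed
  then show ?case by blast
qed

lemma bounded_measurable_qc_path: "bounded_measurable paths (\<lambda>p. qc_path (fst p) (snd p) j n)"
proof -
  obtain C where "\<forall>G D n. \<bar>qc_path G D j n\<bar> \<le> C"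
    using qc_path_bounded by blast
  then show ?thesis
    by (intro bounded_measurableI[where C=C]) auto
qed

text \<open>The quantization noise on the directed edge \<open>q = (n, l)\<close> at time \<open>j\<close>: the error node
  \<open>n\<close> makes when it receives the dithered, quantized value of neighbour \<open>l\<close>.\<close>

definition quant_noise :: "nat \<Rightarrow> 'n \<times> 'n \<Rightarrow> 'n graph_seq \<times> 'n dither_seq \<Rightarrow> real" where
  "quant_noise j q p = of_bool (fst p j (fst q) (snd q)) *
     (quant \<Delta> (qc_path (fst p) (snd p) j (snd q) + clip \<Delta> (snd p (j, q)))
        - qc_path (fst p) (snd p) j (snd q))"

lemma bounded_measurable_quant_noise: "bounded_measurable paths (quant_noise j q)"
proof (rule bounded_measurableI)
  show "quant_noise j q \<in> borel_measurable paths"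
    unfolding quant_noise_def[abs_def] by measurable
  fix p
  let ?y = "qc_path (fst p) (snd p) j (snd q)" and ?c = "clip \<Delta> (snd p (j, q))"
  have "\<bar>quant \<Delta> (?y + ?c) - ?y\<bar> \<le> \<Delta>"
    using quant_error_bound[OF \<Delta>_pos, of "?y + ?c"] clip_bound[OF \<Delta>_pos, of "snd p (j, q)"] by linarith
  then show "\<bar>quant_noise j q p\<bar> \<le> \<Delta>"
    unfolding quant_noise_def using \<Delta>_pos by (auto simp: abs_mult)
qed

lemma quant_noise_update_own:
  "quant_noise j q (G, D((j, q) := v)) = of_bool (G j (fst q) (snd q)) *
     (quant \<Delta> (qc_path G D j (snd q) + clip \<Delta> v) - qc_path G D j (snd q))"
  using qc_path_causal[of j "D((j, q) := v)" D G] by (simp add: quant_noise_def)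

lemma quant_noise_update_other:
  "q' \<noteq> q \<Longrightarrow> quant_noise j q (G, D((j, q') := v)) = quant_noise j q (G, D)"
  using qc_path_causal[of j "D((j, q') := v)" D G] by (simp add: quant_noise_def)

text \<open>The second moment of the noise on edge \<open>q\<close> given everything but its own dither: by
  the dithering lemma it is \<open>\<Delta>\<^sup>2 f (1 - f)\<close> with \<open>f\<close> the fractional part of \<open>x\<^sub>l/\<Delta>\<close>.\<close>

definition noise_variance :: "nat \<Rightarrow> 'n \<times> 'n \<Rightarrow> 'n graph_seq \<times> 'n dither_seq \<Rightarrow> real" where
  "noise_variance j q p = of_bool (fst p j (fst q) (snd q)) *
     (\<Delta>\<^sup>2 * (frac (qc_path (fst p) (snd p) j (snd q) / \<Delta>)
              * (1 - frac (qc_path (fst p) (snd p) j (snd q) / \<Delta>))))"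

lemma noise_variance_nonneg: "0 \<le> noise_variance j q p"
  unfolding noise_variance_def by (simp add: frac_lt_1 less_imp_le)

lemma noise_variance_le: "noise_variance j q p \<le> \<Delta>\<^sup>2/4 * of_bool (fst p j (fst q) (snd q))"
proof -
  have "f * (1 - f) \<le> 1/4" for f :: real
    using sum_squares_ge_zero[of "f - 1/2" 0] by (simp add: power2_eq_square algebra_simps)
  then show ?thesis
    unfolding noise_variance_def using mult_left_mono[of _ "1/4" "\<Delta>\<^sup>2"] by simp
qed

lemma bounded_measurable_noise_variance: "bounded_measurable paths (noise_variance j q)"
proof (rule bounded_measurableI[where C="\<Delta>\<^sup>2"])
  have [measurable]: "(\<lambda>p. qc_path (fst p) (snd p) j (snd q)) \<in> borel_measurable paths"
    by (rule qc_path_measurable)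
  show "noise_variance j q \<in> borel_measurable paths"
    unfolding noise_variance_def[abs_def] frac_def by measurable
  show "\<bar>noise_variance j q p\<bar> \<le> \<Delta>\<^sup>2" for p
    using noise_variance_nonneg[of j q p] noise_variance_le[of j q p] zero_le_power2[of \<Delta>]
    by (cases "fst p j (fst q) (snd q)") simp_all
qed

lemma noise_variance_update: "noise_variance j q (G, D((j, q) := v)) = noise_variance j q (G, D)"
  using qc_path_causal[of j "D((j, q) := v)" D G] by (simp add: noise_variance_def)

definition avg_path :: "nat \<Rightarrow> 'n graph_seq \<times> 'n dither_seq \<Rightarrow> real" where
  "avg_path j p = avg (qc_path (fst p) (snd p) j)"

lemma bounded_measurable_avg_path: "bounded_measurable paths (avg_path j)"
proof -
  have "bounded_measurable paths (\<lambda>p. (\<Sum>n\<in>UNIV. qc_path (fst p) (snd p) j n) * (1 / real CARD('n)))"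
    by (intro bounded_measurable_intros bounded_measurable_qc_path) simp
  then show ?thesis
    unfolding avg_path_def[abs_def] avg_def by simp
qed

lemma avg_path_update: "j \<le> m \<Longrightarrow> avg_path j (G, D((m, q) := v)) = avg_path j (G, D)"
  using qc_path_causal[of j "D((m, q) := v)" D G] by (simp add: avg_path_def)

text \<open>On a symmetric graph the Laplacian part of the update preserves the sum of the states, so
  the average moves only by the total quantization noise.\<close>

lemma avg_path_increment:
  assumes sym: "\<And>n l. fst p j n l = fst p j l n"
  shows "avg_path (Suc j) p = avg_path j p + \<alpha> j / real CARD('n) * (\<Sum>q\<in>UNIV. quant_noise j q p)"
proof -
  define x where "x = qc_path (fst p) (snd p) j"
  define a where "a n l = (of_bool (fst p j n l) :: real)" for n l
  define y where "y n l = quant \<Delta> (x l + clip \<Delta> (snd p (j, n, l)))" for n l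
  have step: "qc_path (fst p) (snd p) (Suc j) n
      = x n + \<alpha> j * (\<Sum>l\<in>UNIV. a n l * (y n l - x l)) + \<alpha> j * (\<Sum>l\<in>UNIV. a n l * (x l - x n))" for n
    by (simp add: sum_nbhd degree_sum a_def x_def y_def sum_subtractf sum_distrib_right
        sum_distrib_left algebra_simps)
  have laplacian: "(\<Sum>n\<in>UNIV. \<Sum>l\<in>UNIV. a n l * (x l - x n)) = 0"
  proof -
    have "(\<Sum>n\<in>UNIV. \<Sum>l\<in>UNIV. a n l * x n) = (\<Sum>l\<in>UNIV. \<Sum>n\<in>UNIV. a n l * x n)"
      by (rule sum.swap)
    also have "\<dots> = (\<Sum>l\<in>UNIV. \<Sum>n\<in>UNIV. a l n * x n)"
      using sym unfolding a_def by simp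
    finally show ?thesis
      by (simp add: right_diff_distrib sum_subtractf)
  qed
  have noise: "(\<Sum>n\<in>UNIV. \<Sum>l\<in>UNIV. a n l * (y n l - x l)) = (\<Sum>q\<in>UNIV. quant_noise j q p)"
    unfolding sum.cartesian_product UNIV_Times_UNIV
    by (rule sum.cong) (auto simp: quant_noise_def a_def x_def y_def)
  have "(\<Sum>n\<in>UNIV. qc_path (fst p) (snd p) (Suc j) n)
      = (\<Sum>n\<in>UNIV. x n) + \<alpha> j * (\<Sum>q\<in>UNIV. quant_noise j q p)"
    unfolding step sum.distrib noise[symmetric] by (simp add: sum_distrib_left[symmetric] laplacian)
  then show ?thesis
    unfolding avg_path_def avg_def x_def by (simp add: add_divide_distrib)
qed

end

lemma measurable_fun_upd_restrict:
  "(\<lambda>x. (fst x)(t := snd x))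
     \<in> measurable (PiM (-{t}) (\<lambda>_. borel) \<Otimes>\<^sub>M borel) (PiM UNIV (\<lambda>_. borel :: 'b::topological_space measure))"
proof -
  have eq: "(\<lambda>x s. if s = t then snd x else fst x s) = (\<lambda>x. (fst x)(t := snd x))"
    by (auto simp: fun_eq_iff)
  show ?thesis
    unfolding eq[symmetric]
  proof (rule measurable_PiM_single')
    fix s
    show "(\<lambda>x. if s = t then snd x else fst x s) \<in> borel_measurable (PiM (-{t}) (\<lambda>_. borel) \<Otimes>\<^sub>M (borel :: 'b measure))"
    proof (cases "s = t")
      case False
      then have "(\<lambda>x. fst x s) \<in> borel_measurable (PiM (-{t}) (\<lambda>_. borel) \<Otimes>\<^sub>M (borel :: 'b measure))"
        by (intro measurable_compose[OF measurable_fst measurable_component_singleton]) auto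
      then show ?thesis using False by simp
    qed simp
  qed (auto simp: space_PiM)
qed

lemma card_ordered_pairs_of_edge:
  "card {q :: 'n \<times> 'n. fst q \<noteq> snd q \<and> {fst q, snd q} = e} \<le> 2"
proof (cases "\<exists>q :: 'n \<times> 'n. fst q \<noteq> snd q \<and> {fst q, snd q} = e")
  case True
  then obtain n l where nl: "{n, l} = e" by blast
  have "{q :: 'n \<times> 'n. fst q \<noteq> snd q \<and> {fst q, snd q} = e} \<subseteq> {(n, l), (l, n)}"
  proof
    fix q :: "'n \<times> 'n" assume "q \<in> {q. fst q \<noteq> snd q \<and> {fst q, snd q} = e}"
    then have "{fst q, snd q} = {n, l}" using nl by simp
    then have "(fst q = n \<and> snd q = l) \<or> (fst q = l \<and> snd q = n)"
      by (simp add: doubleton_eq_iff)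
    then show "q \<in> {(n, l), (l, n)}" by (cases q) auto
  qed
  then have "card {q :: 'n \<times> 'n. fst q \<noteq> snd q \<and> {fst q, snd q} = e} \<le> card {(n, l), (l, n)}"
    by (intro card_mono) simp_all
  also have "\<dots> \<le> 2"
    by (rule card_insert_le_m1) auto
  finally show ?thesis .
next
  case False
  then have empty: "{q :: 'n \<times> 'n. fst q \<noteq> snd q \<and> {fst q, snd q} = e} = {}"
    by auto
  show ?thesis
    unfolding empty by simp
qed

section \<open>The probabilistic model\<close>

locale qc_model = qc_params x0 \<alpha> \<Delta> + prob_space M
  for x0 :: "'n::finite \<Rightarrow> real" and \<alpha> :: "nat \<Rightarrow> real" and \<Delta> :: real and M :: "'a measure" +
  fixes A :: "nat \<Rightarrow> 'a \<Rightarrow> 'n \<Rightarrow> 'n \<Rightarrow> bool" and \<nu> :: "nat \<Rightarrow> 'n \<Rightarrow> 'n \<Rightarrow> 'a \<Rightarrow> real"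
  assumes sym: "\<And>i \<omega> n l. A i \<omega> n l = A i \<omega> l n"
    and irrefl: "\<And>i \<omega> n. \<not> A i \<omega> n n"
    and A_meas: "\<And>i. A i \<in> measurable M (count_space UNIV)"
    and A_ident: "\<And>i. distr M (count_space UNIV) (A i) = distr M (count_space UNIV) (A 0)"
    and \<nu>_meas: "\<And>i n l. \<nu> i n l \<in> borel_measurable M"
    and \<nu>_indep: "indep_vars (\<lambda>_. borel) (\<lambda>(i, n, l). \<nu> i n l) UNIV"
    and \<nu>_unif: "\<And>i n l. distr M borel (\<nu> i n l) = uniform_measure lborel {-\<Delta>/2..<\<Delta>/2}"
    and A_\<nu>_indep: "indep_set
        (sets (vimage_algebra (space M) (\<lambda>\<omega> i. A i \<omega>) graph_seqs))
        (sets (vimage_algebra (space M) (\<lambda>\<omega> (i, n, l). \<nu> i n l \<omega>) dither_seqs))"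
begin

definition graphs :: "'a \<Rightarrow> 'n graph_seq" where
  "graphs \<omega> = (\<lambda>i. A i \<omega>)"

definition dithers :: "'a \<Rightarrow> 'n dither_seq" where
  "dithers \<omega> = (\<lambda>(i, n, l). \<nu> i n l \<omega>)"

abbreviation sample_path :: "'a \<Rightarrow> 'n graph_seq \<times> 'n dither_seq" where
  "sample_path \<omega> \<equiv> (graphs \<omega>, dithers \<omega>)"

abbreviation unif :: "real measure" where
  "unif \<equiv> uniform_measure lborel {-\<Delta>/2..<\<Delta>/2}"

lemma graphs_measurable[measurable]: "graphs \<in> measurable M graph_seqs"
proof -
  have "(\<lambda>\<omega>. \<lambda>i\<in>UNIV. A i \<omega>) \<in> measurable M graph_seqs"
    using A_meas by (intro measurable_restrict) auto
  moreover have "(\<lambda>\<omega>. \<lambda>i\<in>UNIV. A i \<omega>) = graphs"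
    by (simp add: fun_eq_iff graphs_def)
  ultimately show ?thesis by simp
qed

lemma dithers_measurable[measurable]: "dithers \<in> measurable M dither_seqs"
proof -
  have "(\<lambda>\<omega>. \<lambda>s\<in>UNIV. (case s of (i, n, l) \<Rightarrow> \<nu> i n l \<omega>)) \<in> measurable M dither_seqs"
    using \<nu>_meas by (intro measurable_restrict) (auto split: prod.split)
  moreover have "(\<lambda>\<omega>. \<lambda>s\<in>UNIV. (case s of (i, n, l) \<Rightarrow> \<nu> i n l \<omega>)) = dithers"
    by (auto simp: dithers_def fun_eq_iff split: prod.split)
  ultimately show ?thesis by simp
qed

lemma indep_graphs_dithers: "indep_pair graph_seqs graphs dither_seqs dithers"
  using A_\<nu>_indep unfolding graphs_def[abs_def] dithers_def[abs_def]
  by (intro indep_pair_vimage_algebra) (simp_all flip: graphs_def[abs_def] dithers_def[abs_def])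

lemma indep_dither_rest:
  "indep_pair (PiM (-{t}) (\<lambda>_. borel)) (\<lambda>\<omega>. restrict (dithers \<omega>) (-{t})) borel (\<lambda>\<omega>. dithers \<omega> t)"
proof -
  have eq: "(\<lambda>s. (case s of (i, n, l) \<Rightarrow> \<nu> i n l) \<omega>) = dithers \<omega>" for \<omega>
    by (auto simp: dithers_def fun_eq_iff split: prod.split)
  have "indep_var (PiM (-{t}) (\<lambda>_. borel)) (\<lambda>\<omega>. restrict (dithers \<omega>) (-{t}))
                  (PiM {t} (\<lambda>_. borel)) (\<lambda>\<omega>. restrict (dithers \<omega>) {t})"
    using indep_var_restrict[OF \<nu>_indep, of "-{t}" "{t}"] unfolding eq by simp
  from indep_pair_compose[OF indep_pair_of_indep_var[OF this], of id _ "\<lambda>f. f t" borel]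
  show ?thesis
    by simp
qed

lemma dither_distr: "distr M borel (\<lambda>\<omega>. dithers \<omega> t) = unif"
proof -
  obtain i n l where "t = (i, n, l)" by (cases t) auto
  then show ?thesis
    using \<nu>_unif[of i n l] by (simp add: dithers_def[abs_def])
qed

lemma sample_path_measurable[measurable]: "sample_path \<in> measurable M paths"
  by measurable

lemma integrable_path:
  assumes "bounded_measurable paths f" shows "integrable M (\<lambda>\<omega>. f (sample_path \<omega>))"
  by (rule bounded_measurable_integrable[OF bounded_measurable_compose[OF assms sample_path_measurable]])

lemma integral_freeze_dither:
  assumes G: "bounded_measurable paths G"
  shows "(\<integral>\<omega>. G (sample_path \<omega>) \<partial>M) = (\<integral>a. (\<integral>b. (\<integral>v. G (a, b(t := v)) \<partial>unif)
           \<partial>distr M (PiM (-{t}) (\<lambda>_. borel)) (\<lambda>\<omega>. restrict (dithers \<omega>) (-{t}))) \<partial>distr M graph_seqs graphs)"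
proof -
  have "(\<integral>D. G (a, D) \<partial>distr M dither_seqs dithers) = (\<integral>b. (\<integral>v. G (a, b(t := v)) \<partial>unif)
          \<partial>distr M (PiM (-{t}) (\<lambda>_. borel)) (\<lambda>\<omega>. restrict (dithers \<omega>) (-{t})))" for a
  proof -
    have Ga: "bounded_measurable dither_seqs (\<lambda>D. G (a, D))"
      by (rule bounded_measurable_compose[OF G]) (auto simp: space_PiM)
    have G': "bounded_measurable (PiM (-{t}) (\<lambda>_. borel) \<Otimes>\<^sub>M borel) (\<lambda>x. G (a, (fst x)(t := snd x)))"
      by (rule bounded_measurable_compose[OF G], rule measurable_Pair)
         (auto simp: space_PiM intro: measurable_fun_upd_restrict)
    have "(\<integral>D. G (a, D) \<partial>distr M dither_seqs dithers) = (\<integral>\<omega>. G (a, dithers \<omega>) \<partial>M)"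
      using Ga unfolding bounded_measurable_def by (intro integral_distr) auto
    also have "\<dots> = (\<integral>\<omega>. G (a, (restrict (dithers \<omega>) (-{t}))(t := dithers \<omega> t)) \<partial>M)"
      by (intro Bochner_Integration.integral_cong refl arg_cong[where f="\<lambda>D. G (a, D)"]) (auto simp: fun_eq_iff)
    also have "\<dots> = (\<integral>b. (\<integral>v. G (a, b(t := v)) \<partial>distr M borel (\<lambda>\<omega>. dithers \<omega> t))
                 \<partial>distr M (PiM (-{t}) (\<lambda>_. borel)) (\<lambda>\<omega>. restrict (dithers \<omega>) (-{t})))"
      using integral_indep_pair[OF indep_dither_rest G'] by simp
    finally show ?thesis
      by (simp add: dither_distr)
  qed
  then show ?thesis
    by (simp add: integral_indep_pair[OF indep_graphs_dithers G])
qed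

lemma integral_average_dither:
  assumes G: "bounded_measurable paths G" and H: "bounded_measurable paths H"
    and H_inv: "\<And>a b v. H (a, b(t := v)) = H (a, b)"
    and average: "\<And>a b. (\<integral>v. G (a, b(t := v)) \<partial>unif) = H (a, b)"
  shows "(\<integral>\<omega>. G (sample_path \<omega>) \<partial>M) = (\<integral>\<omega>. H (sample_path \<omega>) \<partial>M)"
proof -
  interpret U: prob_space unif
    using \<Delta>_pos by (intro prob_space_uniform_measure) auto
  have "(\<integral>v. H (a, b(t := v)) \<partial>unif) = H (a, b)" for a b
    using U.prob_space by (simp add: H_inv)
  then show ?thesis
    unfolding integral_freeze_dither[OF G, of t] integral_freeze_dither[OF H, of t] average by simp
qed

text \<open>Subtractive dithering makes the quantization noise on an edge orthogonal to every bounded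
  quantity that does not depend on the dither used on that edge.\<close>

lemma quant_noise_orthogonal:
  assumes w: "bounded_measurable paths w" and w_inv: "\<And>a b v. w (a, b((j, q) := v)) = w (a, b)"
  shows "(\<integral>\<omega>. w (sample_path \<omega>) * quant_noise j q (sample_path \<omega>) \<partial>M) = 0"
proof -
  have "(\<integral>\<omega>. w (sample_path \<omega>) * quant_noise j q (sample_path \<omega>) \<partial>M) = (\<integral>\<omega>. 0 \<partial>M)"
  proof (rule integral_average_dither[where t="(j, q)"])
    show "bounded_measurable paths (\<lambda>p. w p * quant_noise j q p)"
      by (intro bounded_measurable_mult w bounded_measurable_quant_noise)
    fix a b
    let ?y = "qc_path a b j (snd q)"
    have "(\<integral>v. w (a, b((j, q) := v)) * quant_noise j q (a, b((j, q) := v)) \<partial>unif)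
        = (w (a, b) * of_bool (a j (fst q) (snd q))) * (\<integral>v. quant \<Delta> (?y + clip \<Delta> v) - ?y \<partial>unif)"
      by (simp add: w_inv quant_noise_update_own mult.assoc)
    then show "(\<integral>v. w (a, b((j, q) := v)) * quant_noise j q (a, b((j, q) := v)) \<partial>unif) = 0"
      using dithered_quant_error(1)[OF \<Delta>_pos, of ?y] by simp
  qed (simp_all add: bounded_measurable_const)
  then show ?thesis by simp
qed

lemma edge_measurable_sample[measurable]: "Measurable.pred M (\<lambda>\<omega>. A j \<omega> n l)"
proof -
  have "(\<lambda>\<omega>. A j \<omega> n l) \<in> measurable M (count_space UNIV)"
    using A_meas by (rule measurable_compose) simp
  from measurable_sets[OF this, of "{True}"] show ?thesis
    unfolding pred_def by (simp add: vimage_def Int_def conj_commute)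
qed

lemma integral_edge_indicator:
  "(\<integral>\<omega>. of_bool (A j \<omega> n l) \<partial>M) = prob {\<omega> \<in> space M. A j \<omega> n l}"
proof -
  have "(\<integral>\<omega>. of_bool (A j \<omega> n l) \<partial>M) = (\<integral>\<omega>. indicator {\<omega> \<in> space M. A j \<omega> n l} \<omega> \<partial>M)"
    by (intro Bochner_Integration.integral_cong) (auto simp: indicator_def)
  also have "\<dots> = prob {\<omega> \<in> space M. A j \<omega> n l}"
    by (simp add: Int_absorb2)
  finally show ?thesis .
qed

lemma quant_noise_second_moment:
  "(\<integral>\<omega>. (quant_noise j q (sample_path \<omega>))\<^sup>2 \<partial>M) \<le> \<Delta>\<^sup>2/4 * prob {\<omega> \<in> space M. A j \<omega> (fst q) (snd q)}"
proof -
  have "(\<integral>\<omega>. (quant_noise j q (sample_path \<omega>))\<^sup>2 \<partial>M) = (\<integral>\<omega>. noise_variance j q (sample_path \<omega>) \<partial>M)"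
  proof (rule integral_average_dither[OF _ bounded_measurable_noise_variance noise_variance_update])
    show "bounded_measurable paths (\<lambda>p. (quant_noise j q p)\<^sup>2)"
      unfolding power2_eq_square by (intro bounded_measurable_mult bounded_measurable_quant_noise)
    fix a b
    let ?y = "qc_path a b j (snd q)"
    have "(\<integral>v. (quant_noise j q (a, b((j, q) := v)))\<^sup>2 \<partial>unif)
        = of_bool (a j (fst q) (snd q)) * (\<integral>v. (quant \<Delta> (?y + clip \<Delta> v) - ?y)\<^sup>2 \<partial>unif)"
      by (simp add: quant_noise_update_own power_mult_distrib)
    then show "(\<integral>v. (quant_noise j q (a, b((j, q) := v)))\<^sup>2 \<partial>unif) = noise_variance j q (a, b)"
      using dithered_quant_error(2)[OF \<Delta>_pos, of ?y] by (simp add: noise_variance_def)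
  qed
  also have "\<dots> \<le> (\<integral>\<omega>. \<Delta>\<^sup>2/4 * of_bool (A j \<omega> (fst q) (snd q)) \<partial>M)"
  proof (rule integral_mono)
    show "integrable M (\<lambda>\<omega>. noise_variance j q (sample_path \<omega>))"
      by (rule integrable_path[OF bounded_measurable_noise_variance])
    show "integrable M (\<lambda>\<omega>. \<Delta>\<^sup>2/4 * of_bool (A j \<omega> (fst q) (snd q)))"
      by (intro bounded_measurable_integrable bounded_measurable_intros) measurable
    show "noise_variance j q (sample_path \<omega>) \<le> \<Delta>\<^sup>2/4 * of_bool (A j \<omega> (fst q) (snd q))" for \<omega>
      using noise_variance_le[of j q "sample_path \<omega>"] by (simp add: graphs_def)
  qed
  also have "\<dots> = \<Delta>\<^sup>2/4 * prob {\<omega> \<in> space M. A j \<omega> (fst q) (snd q)}"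
    by (simp add: integral_edge_indicator)
  finally show ?thesis .
qed

lemma avg_path_increment_sample:
  "avg_path (Suc j) (sample_path \<omega>) = avg_path j (sample_path \<omega>)
     + \<alpha> j / real CARD('n) * (\<Sum>q\<in>UNIV. quant_noise j q (sample_path \<omega>))"
  by (rule avg_path_increment) (simp add: graphs_def sym)

lemma avg_increment_orthogonal:
  assumes w: "bounded_measurable paths w" and w_inv: "\<And>a b q v. w (a, b((j, q) := v)) = w (a, b)"
  shows "(\<integral>\<omega>. w (sample_path \<omega>) * (avg_path (Suc j) (sample_path \<omega>) - avg_path j (sample_path \<omega>)) \<partial>M) = 0"
proof -
  have int: "integrable M (\<lambda>\<omega>. w (sample_path \<omega>) * quant_noise j q (sample_path \<omega>))" for q
    by (intro integrable_path bounded_measurable_mult w bounded_measurable_quant_noise)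
  have "(\<integral>\<omega>. w (sample_path \<omega>) * (avg_path (Suc j) (sample_path \<omega>) - avg_path j (sample_path \<omega>)) \<partial>M)
      = (\<integral>\<omega>. \<alpha> j / real CARD('n) * (\<Sum>q\<in>UNIV. w (sample_path \<omega>) * quant_noise j q (sample_path \<omega>)) \<partial>M)"
    by (simp add: avg_path_increment_sample sum_distrib_left algebra_simps)
  also have "\<dots> = \<alpha> j / real CARD('n) * (\<Sum>q\<in>UNIV. \<integral>\<omega>. w (sample_path \<omega>) * quant_noise j q (sample_path \<omega>) \<partial>M)"
    using int by simp
  also have "\<dots> = 0"
    using quant_noise_orthogonal[OF w w_inv] by simp
  finally show ?thesis .
qed

text \<open>Hence the network average has orthogonal increments in the sense of Kolmogorov's inequality:
  the weight below is a bounded function of averages up to time \<open>m\<close>.\<close>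

lemma avg_orthogonal_increments: "orthogonal_increments (\<lambda>j \<omega>. avg_path j (sample_path \<omega>))"
  unfolding orthogonal_increments_def
proof (intro allI ballI)
  fix m and B :: "(nat \<Rightarrow> real) set" assume B: "B \<in> sets (PiM {..m} (\<lambda>_. borel))"
  define w where "w p = indicator B (\<lambda>j\<in>{..m}. avg_path j p) * avg_path m p" for p
  have past: "(\<lambda>p. \<lambda>j\<in>{..m}. avg_path j p) \<in> measurable paths (PiM {..m} (\<lambda>_. borel))"
    using bounded_measurable_avg_path by (intro measurable_restrict) (auto simp: bounded_measurable_def)
  have "bounded_measurable (PiM {..m} (\<lambda>_. borel)) (indicator B)"
    using B by (intro bounded_measurableI[where C=1]) (auto simp: indicator_def)
  then have w: "bounded_measurable paths w"
    unfolding w_def by (intro bounded_measurable_mult bounded_measurable_compose[OF _ past]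
        bounded_measurable_avg_path)
  have "w (a, b((m, q) := v)) = w (a, b)" for a b q v
  proof -
    have "(\<lambda>j\<in>{..m}. avg_path j (a, b((m, q) := v))) = (\<lambda>j\<in>{..m}. avg_path j (a, b))"
      by (intro restrict_ext avg_path_update) simp
    then show ?thesis
      unfolding w_def by (simp add: avg_path_update)
  qed
  from avg_increment_orthogonal[OF w this]
  show "(\<integral>\<omega>. indicator B (\<lambda>j\<in>{..m}. avg_path j (sample_path \<omega>)) * avg_path m (sample_path \<omega>)
          * (avg_path (Suc m) (sample_path \<omega>) - avg_path m (sample_path \<omega>)) \<partial>M) = 0"
    by (simp add: w_def)
qed

text \<open>Noise on distinct edges is uncorrelated, so the second moment of an increment is the sum
  of the second moments of the edge noises.\<close>

lemma avg_increment_second_moment: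
  "(\<integral>\<omega>. (avg_path (Suc j) (sample_path \<omega>) - avg_path j (sample_path \<omega>))\<^sup>2 \<partial>M)
     \<le> (\<alpha> j / real CARD('n))\<^sup>2 * (\<Delta>\<^sup>2/4 * (\<Sum>q\<in>UNIV. prob {\<omega> \<in> space M. A j \<omega> (fst q) (snd q)}))"
proof -
  define c where "c = \<alpha> j / real CARD('n)"
  define e where "e q \<omega> = quant_noise j q (sample_path \<omega>)" for q \<omega>
  have int: "integrable M (\<lambda>\<omega>. e q \<omega> * e q' \<omega>)" for q q'
    unfolding e_def by (intro integrable_path bounded_measurable_mult bounded_measurable_quant_noise)
  have uncorrelated: "(\<integral>\<omega>. e q \<omega> * e q' \<omega> \<partial>M) = 0" if "q' \<noteq> q" for q q'
    unfolding e_def using that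
    by (intro quant_noise_orthogonal bounded_measurable_quant_noise) (simp add: quant_noise_update_other)
  have diagonal: "(\<Sum>q'\<in>UNIV. \<integral>\<omega>. e q \<omega> * e q' \<omega> \<partial>M) = (\<integral>\<omega>. (e q \<omega>)\<^sup>2 \<partial>M)" for q
    using sum.remove[of UNIV q "\<lambda>q'. \<integral>\<omega>. e q \<omega> * e q' \<omega> \<partial>M"] uncorrelated
    by (simp add: power2_eq_square sum.neutral)
  have "(\<integral>\<omega>. (avg_path (Suc j) (sample_path \<omega>) - avg_path j (sample_path \<omega>))\<^sup>2 \<partial>M)
      = (\<integral>\<omega>. c\<^sup>2 * (\<Sum>q\<in>UNIV. \<Sum>q'\<in>UNIV. e q \<omega> * e q' \<omega>) \<partial>M)"
    by (simp add: avg_path_increment_sample c_def e_def power2_eq_square sum_product algebra_simps)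
  also have "\<dots> = c\<^sup>2 * (\<Sum>q\<in>UNIV. \<integral>\<omega>. (e q \<omega>)\<^sup>2 \<partial>M)"
    using int by (simp add: diagonal Bochner_Integration.integral_sum integrable_sum)
  also have "\<dots> \<le> c\<^sup>2 * (\<Sum>q\<in>UNIV. \<Delta>\<^sup>2/4 * prob {\<omega> \<in> space M. A j \<omega> (fst q) (snd q)})"
    unfolding e_def by (intro mult_left_mono sum_mono quant_noise_second_moment) simp
  finally show ?thesis
    by (simp add: c_def sum_distrib_left)
qed

lemma prob_edge_ident: "prob {\<omega> \<in> space M. A j \<omega> n l} = prob {\<omega> \<in> space M. A 0 \<omega> n l}"
proof -
  have "prob {\<omega> \<in> space M. A i \<omega> n l} = measure (distr M (count_space UNIV) (A i)) {G. G n l}" for i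
  proof -
    have "A i -` {G. G n l} \<inter> space M = {\<omega> \<in> space M. A i \<omega> n l}" by auto
    then show ?thesis by (simp add: measure_distr[OF A_meas])
  qed
  then show ?thesis
    by (simp add: A_ident[of j])
qed

text \<open>Only realizable edges carry noise, each in both directions.\<close>

lemma card_likely_edges:
  "card {q :: 'n \<times> 'n. 0 < prob {\<omega> \<in> space M. A 0 \<omega> (fst q) (snd q)}} \<le> 2 * card (realizable_edges M A)"
proof -
  let ?R = "realizable_edges M A"
  let ?P = "{q :: 'n \<times> 'n. 0 < prob {\<omega> \<in> space M. A 0 \<omega> (fst q) (snd q)}}"
  have "?P \<subseteq> (\<Union>e\<in>?R. {q. fst q \<noteq> snd q \<and> {fst q, snd q} = e})"
  proof
    fix q assume q: "q \<in> ?P"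
    have "fst q \<noteq> snd q"
      using q irrefl by (auto simp: fun_eq_iff)
    with q show "q \<in> (\<Union>e\<in>?R. {q. fst q \<noteq> snd q \<and> {fst q, snd q} = e})"
      by (auto simp: realizable_edges_def)
  qed
  then have "card ?P \<le> card (\<Union>e\<in>?R. {q :: 'n \<times> 'n. fst q \<noteq> snd q \<and> {fst q, snd q} = e})"
    by (intro card_mono) simp_all
  also have "\<dots> \<le> (\<Sum>e\<in>?R. card {q :: 'n \<times> 'n. fst q \<noteq> snd q \<and> {fst q, snd q} = e})"
    by (intro card_UN_le) simp
  also have "\<dots> \<le> (\<Sum>e\<in>?R. 2)"
    by (intro sum_mono card_ordered_pairs_of_edge)
  also have "\<dots> = 2 * card ?R"
    by simp
  finally show ?thesis .
qed

lemma expected_edge_count: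
  "(\<Sum>q\<in>UNIV. prob {\<omega> \<in> space M. A j \<omega> (fst q) (snd q)}) \<le> 2 * real (card (realizable_edges M A))"
proof -
  let ?p = "\<lambda>q :: 'n \<times> 'n. prob {\<omega> \<in> space M. A 0 \<omega> (fst q) (snd q)}"
  have "(\<Sum>q\<in>UNIV. prob {\<omega> \<in> space M. A j \<omega> (fst q) (snd q)}) = (\<Sum>q\<in>{q. 0 < ?p q}. ?p q)"
    by (subst prob_edge_ident) (intro sum.mono_neutral_right; auto simp: less_le)
  also have "\<dots> \<le> real (card {q. 0 < ?p q})"
    using sum_mono[of "{q. 0 < ?p q}" ?p "\<lambda>_. 1"] by simp
  also have "\<dots> \<le> 2 * real (card (realizable_edges M A))"
    using card_likely_edges by linarith
  finally show ?thesis .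
qed

lemma avg_second_moment:
  "(\<integral>\<omega>. (avg_path n (sample_path \<omega>))\<^sup>2 \<partial>M)
     \<le> (avg x0)\<^sup>2 + (\<Sum>j<n. (\<alpha> j)\<^sup>2) * (\<Delta>\<^sup>2 * real (card (realizable_edges M A)) / (2 * (real CARD('n))\<^sup>2))"
proof (induction n)
  case 0
  show ?case
    using prob_space by (simp add: avg_path_def)
next
  case (Suc m)
  let ?K = "\<Delta>\<^sup>2 * real (card (realizable_edges M A)) / (2 * (real CARD('n))\<^sup>2)"
  have "(\<integral>\<omega>. (avg_path (Suc m) (sample_path \<omega>) - avg_path m (sample_path \<omega>))\<^sup>2 \<partial>M)
      \<le> (\<alpha> m / real CARD('n))\<^sup>2 * (\<Delta>\<^sup>2/4 * (2 * real (card (realizable_edges M A))))"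
    by (rule order_trans[OF avg_increment_second_moment])
       (intro mult_left_mono expected_edge_count; simp)
  also have "\<dots> = (\<alpha> m)\<^sup>2 * ?K"
    by (simp add: power_divide field_simps)
  finally have "(\<integral>\<omega>. (avg_path (Suc m) (sample_path \<omega>) - avg_path m (sample_path \<omega>))\<^sup>2 \<partial>M)
      \<le> (\<alpha> m)\<^sup>2 * ?K" .
  moreover have "(\<Sum>j<Suc m. (\<alpha> j)\<^sup>2) * ?K = (\<Sum>j<m. (\<alpha> j)\<^sup>2) * ?K + (\<alpha> m)\<^sup>2 * ?K"
    by (simp only: sum.lessThan_Suc distrib_right)
  ultimately show ?case
    using Suc.IH orthogonal_increments_square[OF bounded_measurable_compose[OF
        bounded_measurable_avg_path sample_path_measurable] avg_orthogonal_increments, of m]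
    by linarith
qed

lemma avg_maximal_inequality:
  assumes "0 < a"
  shows "a\<^sup>2 * prob {\<omega> \<in> space M. \<exists>j\<le>n. a < \<bar>avg_path j (sample_path \<omega>)\<bar>}
     \<le> (avg x0)\<^sup>2 + (\<Sum>j<n. (\<alpha> j)\<^sup>2) * (\<Delta>\<^sup>2 * real (card (realizable_edges M A)) / (2 * (real CARD('n))\<^sup>2))"
  using kolmogorov_maximal_inequality[OF bounded_measurable_compose[OF bounded_measurable_avg_path
      sample_path_measurable] avg_orthogonal_increments assms, of n] avg_second_moment[of n]
  by linarith

lemma prob_avg_ever_exceeds:
  assumes a: "0 < a" and sq: "summable (\<lambda>j. (\<alpha> j)\<^sup>2)"
  shows "prob {\<omega> \<in> space M. \<exists>j. a < \<bar>avg_path j (sample_path \<omega>)\<bar>}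
     \<le> ((avg x0)\<^sup>2 + (\<Sum>j. (\<alpha> j)\<^sup>2) * (\<Delta>\<^sup>2 * real (card (realizable_edges M A)) / (2 * (real CARD('n))\<^sup>2))) / a\<^sup>2"
proof -
  define K where "K = \<Delta>\<^sup>2 * real (card (realizable_edges M A)) / (2 * (real CARD('n))\<^sup>2)"
  define T where "T n = {\<omega> \<in> space M. \<exists>j\<le>n. a < \<bar>avg_path j (sample_path \<omega>)\<bar>}" for n
  have T_sets: "T n \<in> sets M" for n
  proof -
    have [measurable]: "(\<lambda>\<omega>. avg_path j (sample_path \<omega>)) \<in> borel_measurable M" for j
      using bounded_measurable_compose[OF bounded_measurable_avg_path sample_path_measurable]
      unfolding bounded_measurable_def by blast
    show ?thesis unfolding T_def by measurable
  qed
  have bound: "prob (T n) \<le> ((avg x0)\<^sup>2 + (\<Sum>j. (\<alpha> j)\<^sup>2) * K) / a\<^sup>2" for n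
  proof -
    have "a\<^sup>2 * prob (T n) \<le> (avg x0)\<^sup>2 + (\<Sum>j<n. (\<alpha> j)\<^sup>2) * K"
      using avg_maximal_inequality[OF a, of n] unfolding T_def K_def .
    also have "(\<Sum>j<n. (\<alpha> j)\<^sup>2) * K \<le> (\<Sum>j. (\<alpha> j)\<^sup>2) * K"
      using sum_le_suminf[OF sq] by (intro mult_right_mono) (auto simp: K_def)
    finally show ?thesis
      using a by (simp add: pos_le_divide_eq mult.commute)
  qed
  have "incseq T"
    unfolding incseq_def T_def by (auto intro: order_trans)
  then have "(\<lambda>n. prob (T n)) \<longlonglongrightarrow> prob (\<Union>n. T n)"
    using T_sets by (intro finite_Lim_measure_incseq) auto
  then have "prob (\<Union>n. T n) \<le> ((avg x0)\<^sup>2 + (\<Sum>j. (\<alpha> j)\<^sup>2) * K) / a\<^sup>2"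
    by (rule LIMSEQ_le_const2) (use bound in blast)
  moreover have "(\<Union>n. T n) = {\<omega> \<in> space M. \<exists>j. a < \<bar>avg_path j (sample_path \<omega>)\<bar>}"
    by (auto simp: T_def)
  ultimately show ?thesis
    by (simp add: K_def)
qed

text \<open>The dithers lie in the quantization cell almost surely, so the QC state coincides with
  its sample-path version almost surely.\<close>

lemma qc_state_ae_eq:
  "AE \<omega> in M. \<forall>j. qc_state x0 A \<nu> \<alpha> \<Delta> j \<omega> = qc_path (graphs \<omega>) (dithers \<omega>) j"
proof -
  have "AE \<omega> in M. \<forall>t. clip \<Delta> (dithers \<omega> t) = dithers \<omega> t"
  proof (subst AE_all_countable, intro allI)
    fix t :: "nat \<times> 'n \<times> 'n"
    have "AE v in unif. v \<in> {-\<Delta>/2..<\<Delta>/2}"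
      by (rule AE_uniform_measureI) auto
    then have "AE v in distr M borel (\<lambda>\<omega>. dithers \<omega> t). v \<in> {-\<Delta>/2..<\<Delta>/2}"
      unfolding dither_distr .
    then have "AE \<omega> in M. dithers \<omega> t \<in> {-\<Delta>/2..<\<Delta>/2}"
      by (rule AE_distrD[rotated]) measurable
    then show "AE \<omega> in M. clip \<Delta> (dithers \<omega> t) = dithers \<omega> t"
      by eventually_elim (auto simp: clip_def)
  qed
  then show ?thesis
  proof eventually_elim
    case (elim \<omega>)
    then have "clip \<Delta> (\<nu> i n l \<omega>) = \<nu> i n l \<omega>" for i n l
      using spec[OF elim, of "(i, n, l)"] by (simp add: dithers_def)
    then have "qc_state x0 A \<nu> \<alpha> \<Delta> j \<omega> = qc_path (\<lambda>i. A i \<omega>) (\<lambda>(i, n, l). \<nu> i n l \<omega>) j" for j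
      by (rule qc_state_eq_qc_path)
    then show ?case
      by (simp add: graphs_def dithers_def)
  qed
qed

lemma prob_sup_avg_exceeds:
  "measure M {\<omega> \<in> space M. (SUP j. ereal \<bar>avg (qc_state x0 A \<nu> \<alpha> \<Delta> j \<omega>)\<bar>) > ereal a}
     \<le> prob {\<omega> \<in> space M. \<exists>j. a < \<bar>avg_path j (sample_path \<omega>)\<bar>}"
proof (rule finite_measure_mono_AE)
  show "AE \<omega> in M. \<omega> \<in> {\<omega> \<in> space M. (SUP j. ereal \<bar>avg (qc_state x0 A \<nu> \<alpha> \<Delta> j \<omega>)\<bar>) > ereal a}
      \<longrightarrow> \<omega> \<in> {\<omega> \<in> space M. \<exists>j. a < \<bar>avg_path j (sample_path \<omega>)\<bar>}"
    using qc_state_ae_eq by eventually_elim (auto simp: less_SUP_iff avg_path_def)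
  have [measurable]: "(\<lambda>\<omega>. avg_path j (sample_path \<omega>)) \<in> borel_measurable M" for j
    using bounded_measurable_compose[OF bounded_measurable_avg_path sample_path_measurable]
    unfolding bounded_measurable_def by blast
  show "{\<omega> \<in> space M. \<exists>j. a < \<bar>avg_path j (sample_path \<omega>)\<bar>} \<in> sets M"
    by measurable
qed

end

section \<open>The main theorem\<close>

lemma prob_le_sqrt_of_le_div_square:
  fixes p B a :: real
  assumes "0 \<le> p" "p \<le> 1" "0 < a" "p \<le> B / a\<^sup>2"
  shows "p \<le> sqrt B / a"
proof -
  have "p\<^sup>2 \<le> p"
    using mult_left_le[of p p] assms(1,2) by (simp add: power2_eq_square)
  then have "p\<^sup>2 \<le> B / a\<^sup>2"
    using assms(4) by linarith
  then have "sqrt (p\<^sup>2) \<le> sqrt (B / a\<^sup>2)"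
    by (rule real_sqrt_le_mono)
  then show ?thesis
    using assms by (simp add: real_sqrt_divide)
qed

lemma noise_constant_le:
  fixes R N s \<Delta> :: real
  assumes "0 \<le> R" "0 \<le> s"
  shows "s * (\<Delta>\<^sup>2 * R / (2 * N\<^sup>2)) \<le> 2 * R * \<Delta>\<^sup>2 / (3 * N\<^sup>2) * s"
proof -
  define X where "X = \<Delta>\<^sup>2 * R / N\<^sup>2"
  have half: "\<Delta>\<^sup>2 * R / (2 * N\<^sup>2) = X / 2"
    by (simp add: X_def)
  have two_thirds: "2 * R * \<Delta>\<^sup>2 / (3 * N\<^sup>2) = X * (2/3)"
    by (simp add: X_def ac_simps)
  have "0 \<le> X"
    using assms by (simp add: X_def)
  then have "X / 2 \<le> X * (2/3)"
    by simp
  then have "s * (X / 2) \<le> s * (X * (2/3))"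
    using assms(2) by (rule mult_left_mono)
  then show ?thesis
    unfolding half two_thirds by (simp add: ac_simps)
qed

theorem mainTheorem9:
  fixes M :: "'a measure"
    and A :: "nat \<Rightarrow> 'a \<Rightarrow> 'n::finite \<Rightarrow> 'n \<Rightarrow> bool"
    and \<nu> :: "nat \<Rightarrow> 'n \<Rightarrow> 'n \<Rightarrow> 'a \<Rightarrow> real"
    and \<alpha> :: "nat \<Rightarrow> real"
    and \<Delta> a :: real
    and x0 :: "'n \<Rightarrow> real"
  assumes prob: "prob_space M"
    and N2: "CARD('n) \<ge> 2"
    and sym: "\<And>i \<omega> n l. A i \<omega> n l = A i \<omega> l n"
    and irrefl: "\<And>i \<omega> n. \<not> A i \<omega> n n"
    and A_meas: "\<And>i. A i \<in> measurable M (count_space UNIV)"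
    and A_indep: "prob_space.indep_vars M (\<lambda>_. count_space UNIV) A UNIV"
    and A_ident: "\<And>i. distr M (count_space UNIV) (A i) = distr M (count_space UNIV) (A 0)"
    and \<Delta>_pos: "\<Delta> > 0"
    and \<nu>_meas: "\<And>i n l. \<nu> i n l \<in> borel_measurable M"
    and \<nu>_indep: "prob_space.indep_vars M (\<lambda>_. borel) (\<lambda>(i, n, l). \<nu> i n l) UNIV"
    and \<nu>_unif: "\<And>i n l. distr M borel (\<nu> i n l) =
                     uniform_measure lborel {-\<Delta>/2..<\<Delta>/2}"
    and A_\<nu>_indep: "prob_space.indep_set M
        (sets (vimage_algebra (space M) (\<lambda>\<omega> i. A i \<omega>) (PiM UNIV (\<lambda>_. count_space UNIV))))
        (sets (vimage_algebra (space M) (\<lambda>\<omega> (i, n, l). \<nu> i n l \<omega>) (PiM UNIV (\<lambda>_. borel))))"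
    and \<alpha>_pos: "\<And>i. \<alpha> i > 0"
    and \<alpha>_div: "filterlim (\<lambda>k. \<Sum>i<k. \<alpha> i) at_top sequentially"
    and \<alpha>_sq: "summable (\<lambda>i. (\<alpha> i)\<^sup>2)"
    and a_pos: "a > 0"
  shows "measure M {\<omega> \<in> space M.
            (SUP j. ereal \<bar>avg (qc_state x0 A \<nu> \<alpha> \<Delta> j \<omega>)\<bar>) > ereal a}
         \<le> sqrt ((avg x0)\<^sup>2
                  + 2 * real (card (realizable_edges M A)) * \<Delta>\<^sup>2 / (3 * (real CARD('n))\<^sup>2)
                    * (\<Sum>j. (\<alpha> j)\<^sup>2)) / a"
proof -
  interpret qc_model x0 \<alpha> \<Delta> M A \<nu>
    using prob sym irrefl A_meas A_ident \<Delta>_pos \<nu>_meas \<nu>_indep \<nu>_unif A_\<nu>_indep \<alpha>_pos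
    unfolding qc_model_def qc_params_def qc_model_axioms_def by (simp add: less_imp_le)
  define R where "R = real (card (realizable_edges M A))"
  define N where "N = real CARD('n)"
  let ?P = "measure M {\<omega> \<in> space M. (SUP j. ereal \<bar>avg (qc_state x0 A \<nu> \<alpha> \<Delta> j \<omega>)\<bar>) > ereal a}"
  have "?P \<le> ((avg x0)\<^sup>2 + (\<Sum>j. (\<alpha> j)\<^sup>2) * (\<Delta>\<^sup>2 * R / (2 * N\<^sup>2))) / a\<^sup>2"
    unfolding R_def N_def
    by (rule order_trans[OF prob_sup_avg_exceeds prob_avg_ever_exceeds[OF a_pos \<alpha>_sq]])
  also have "\<dots> \<le> ((avg x0)\<^sup>2 + 2 * R * \<Delta>\<^sup>2 / (3 * N\<^sup>2) * (\<Sum>j. (\<alpha> j)\<^sup>2)) / a\<^sup>2"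
    by (intro divide_right_mono add_left_mono noise_constant_le suminf_nonneg[OF \<alpha>_sq]) (simp_all add: R_def)
  finally show ?thesis
    using a_pos unfolding R_def N_def by (intro prob_le_sqrt_of_le_div_square) auto
qed

end
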